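(* Let $(X,d)$ be a compact metric space, $\mathbb{F}=\{f_n:n\in\mathbb{N}\}$ a sequence of continuous surjective self-maps of $X$, and $k\in\mathbb{N}$. If $(X,\mathbb{F})$ is sensitive then $(X,\mathbb{F}_k)$ is sensitive. If the family $\mathbb{F}$ is feeble open, then $(X,\mathbb{F}_k)$ sensitive implies $(X,\mathbb{F})$ sensitive.
   Context: Write $\omega_n=f_n\circ\cdots\circ f_1$ and, for $n>k$, $\omega^k_n=f_n\circ\cdots\circ f_{k+1}$; $\mathbb{F}_k=\{f_n:n\ge k+1\}$ is the truncated family. $(X,\mathbb{F})$ is sensitive if there is $\delta>0$ such that for every $x\in X$ and every neighborhood $U$ of $x$ there is $n\in\mathbb{N}$ with $\mathrm{diam}(\omega_n(U))>\delta$; $(X,\mathbb{F}_k)$ is sensitive if the same holds with $\omega^k_n$ ($n>k$). $\mathbb{F}$ is feeble open if for every non-empty open $U$ and every $f\in\mathbb{F}$, $f(U)$ has non-empty interior. *)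

theory Defs
  imports "HOL-Analysis.Analysis"
begin

text \<open>The family is indexed by positive naturals: f 1, f 2, ... (the value f 0 is ignored).
  omega_from f k n = f n o ... o f (k+1) for n > k (identity for n \<le> k);
  so omega_from f 0 n is the paper's omega_n.\<close>

fun omega_from :: "(nat \<Rightarrow> 'a \<Rightarrow> 'a) \<Rightarrow> nat \<Rightarrow> nat \<Rightarrow> 'a \<Rightarrow> 'a" where
  "omega_from f k 0 = id"
| "omega_from f k (Suc n) = (if Suc n \<le> k then id else f (Suc n) \<circ> omega_from f k n)"

definition nbhd_in :: "'a::metric_space set \<Rightarrow> 'a \<Rightarrow> 'a set \<Rightarrow> bool" where
  "nbhd_in X x U \<longleftrightarrow> U \<subseteq> X \<and> (\<exists>V. openin (top_of_set X) V \<and> x \<in> V \<and> V \<subseteq> U)"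

text \<open>Sensitivity of the truncated family F_k = {f n : n \<ge> k+1}; F_0 is F itself.\<close>
definition sensitive_from :: "'a::metric_space set \<Rightarrow> (nat \<Rightarrow> 'a \<Rightarrow> 'a) \<Rightarrow> nat \<Rightarrow> bool" where
  "sensitive_from X f k \<longleftrightarrow>
     (\<exists>\<delta>>0. \<forall>x\<in>X. \<forall>U. nbhd_in X x U \<longrightarrow>
        (\<exists>n>k. diameter (omega_from f k n ` U) > \<delta>))"

definition feeble_open :: "'a::metric_space set \<Rightarrow> (nat \<Rightarrow> 'a \<Rightarrow> 'a) \<Rightarrow> bool" where
  "feeble_open X f \<longleftrightarrow>
     (\<forall>U n. openin (top_of_set X) U \<and> U \<noteq> {} \<and> n \<ge> 1 \<longrightarrow>
        (\<exists>W. openin (top_of_set X) W \<and> W \<noteq> {} \<and> W \<subseteq> f n ` U))"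

end

theory Submission
  imports Defs
begin

text \<open>Write \<open>\<omega>\<^sub>j\<^sub>n\<close> for \<open>omega_from f j n\<close>, so that \<open>\<omega>\<^sub>0\<^sub>n = \<omega>\<^sub>k\<^sub>n \<circ> \<omega>\<^sub>0\<^sub>k\<close> for \<open>n \<ge> k\<close>.
  If \<open>\<F>\<close> is sensitive with constant \<open>\<delta>\<close>, take \<open>x = \<omega>\<^sub>0\<^sub>k z\<close> by surjectivity; by continuity
  of the finitely many maps \<open>\<omega>\<^sub>0\<^sub>j\<close> (\<open>j \<le> k\<close>) a small neighbourhood of \<open>z\<close> inside
  \<open>\<omega>\<^sub>0\<^sub>k\<^sup>-\<^sup>1 U\<close> is not expanded beyond \<open>\<delta>\<close> before time \<open>k\<close>, so its expansion happens at
  some \<open>n > k\<close> and lies inside \<open>\<omega>\<^sub>k\<^sub>n U\<close>. Conversely, feeble openness makes \<open>\<omega>\<^sub>0\<^sub>k U\<close>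
  contain a nonempty open set, whose expansion under \<open>\<F>\<^sub>k\<close> lies inside \<open>\<omega>\<^sub>0\<^sub>n U\<close>.\<close>

lemma omega_from_split:
  assumes "j \<le> k" "k \<le> n"
  shows "omega_from f j n = omega_from f k n \<circ> omega_from f j k"
  using assms(2)
proof (induction n)
  case 0
  then show ?case by simp
next
  case (Suc n)
  show ?case
  proof (cases "k = Suc n")
    case True
    then show ?thesis by simp
  next
    case False
    with Suc.prems have "k \<le> n" by simp
    with Suc.IH False Suc.prems assms(1) show ?thesis by (auto simp: fun_eq_iff)
  qed
qed

lemma omega_from_image_subset:
  assumes "\<And>n. n \<ge> 1 \<Longrightarrow> f n ` X \<subseteq> X"
  shows "omega_from f k n ` X \<subseteq> X"
proof (induction n)
  case (Suc n)
  have "omega_from f k (Suc n) ` X = (if Suc n \<le> k then X else f (Suc n) ` omega_from f k n ` X)"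
    by (simp add: image_image)
  also have "\<dots> \<subseteq> X"
    using order_trans[OF image_mono[OF Suc] assms[of "Suc n"]] by simp
  finally show ?case .
qed simp

lemma omega_from_image_eq:
  assumes "\<And>n. n \<ge> 1 \<Longrightarrow> f n ` X = X"
  shows "omega_from f k n ` X = X"
proof (induction n)
  case (Suc n)
  have "omega_from f k (Suc n) ` X = (if Suc n \<le> k then X else f (Suc n) ` omega_from f k n ` X)"
    by (simp add: image_image)
  with Suc assms[of "Suc n"] show ?case by simp
qed simp

lemma continuous_on_omega_from:
  assumes "\<And>n. n \<ge> 1 \<Longrightarrow> continuous_on X (f n)"
    and "\<And>n. n \<ge> 1 \<Longrightarrow> f n ` X \<subseteq> X"
  shows "continuous_on X (omega_from f k n)"
proof (induction n)
  case (Suc n)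
  have "continuous_on X (f (Suc n) \<circ> omega_from f k n)"
    using Suc continuous_on_subset[OF assms(1) omega_from_image_subset[OF assms(2)]]
    by (intro continuous_on_compose) auto
  then show ?case by (simp add: continuous_on_id)
qed (simp add: continuous_on_id)

lemma bounded_omega_from_image:
  assumes "bounded X" "\<And>n. n \<ge> 1 \<Longrightarrow> f n ` X \<subseteq> X" "U \<subseteq> X"
  shows "bounded (omega_from f k n ` U)"
  using assms omega_from_image_subset[where f=f and X=X and k=k and n=n]
  by (meson bounded_subset image_mono order_trans)

lemma nbhd_in_openin:
  assumes "openin (top_of_set X) V" "x \<in> V"
  shows "nbhd_in X x V"
  using assms openin_imp_subset unfolding nbhd_in_def by blast

lemma diameter_le_twice_radius:
  fixes S :: "'a::metric_space set"
  assumes "\<And>y. y \<in> S \<Longrightarrow> dist y c \<le> r" "0 \<le> r"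
  shows "diameter S \<le> 2 * r"
proof (rule ccontr)
  assume "\<not> diameter S \<le> 2 * r"
  moreover have "bounded S"
    using assms(1) by (intro bounded_subset[OF bounded_cball, of _ c r]) (auto simp: dist_commute)
  ultimately obtain a b where ab: "a \<in> S" "b \<in> S" "dist a b > (2 * r + diameter S) / 2"
    using diameter_lower_bounded[of S "(2 * r + diameter S) / 2"] assms(2) by auto
  moreover have "dist a b \<le> dist a c + dist b c" by (rule dist_triangle2)
  ultimately show False
    using assms(1)[OF ab(1)] assms(1)[OF ab(2)] \<open>\<not> diameter S \<le> 2 * r\<close> by argo
qed

lemma continuous_on_finite_family_dist_less:
  assumes "finite J" "\<And>j. j \<in> J \<Longrightarrow> continuous_on X (g j)" "z \<in> X" "\<epsilon> > 0"
  obtains e where "e > 0"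
    "\<And>y j. y \<in> X \<Longrightarrow> dist y z < e \<Longrightarrow> j \<in> J \<Longrightarrow> dist (g j y) (g j z) < \<epsilon>"
proof -
  have "eventually (\<lambda>y. \<forall>j\<in>J. dist (g j y) (g j z) < \<epsilon>) (at z within X)"
  proof (rule eventually_ball_finite[OF assms(1)], intro ballI)
    fix j assume "j \<in> J"
    then have "(g j \<longlongrightarrow> g j z) (at z within X)"
      using assms(2,3) continuous_on_def by blast
    then show "eventually (\<lambda>y. dist (g j y) (g j z) < \<epsilon>) (at z within X)"
      using assms(4) by (rule tendstoD)
  qed
  then obtain e where "e > 0" and close:
    "\<And>y. y \<in> X \<Longrightarrow> y \<noteq> z \<Longrightarrow> dist y z < e \<Longrightarrow> \<forall>j\<in>J. dist (g j y) (g j z) < \<epsilon>"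
    unfolding eventually_at by blast
  show ?thesis
  proof (rule that[OF \<open>e > 0\<close>])
    fix y j assume "y \<in> X" "dist y z < e" "j \<in> J"
    with close assms(4) show "dist (g j y) (g j z) < \<epsilon>" by (cases "y = z") auto
  qed
qed

lemma nbhd_with_small_initial_images:
  assumes "\<And>n. n \<ge> 1 \<Longrightarrow> continuous_on X (f n)" "\<And>n. n \<ge> 1 \<Longrightarrow> f n ` X \<subseteq> X"
    and "z \<in> X" "\<delta> > 0"
  obtains V where "openin (top_of_set X) V" "z \<in> V"
    "\<And>j S. j \<le> k \<Longrightarrow> S \<subseteq> V \<Longrightarrow> diameter (omega_from f 0 j ` S) \<le> \<delta>"
proof -
  obtain e where "e > 0" and close:
    "\<And>y j. y \<in> X \<Longrightarrow> dist y z < e \<Longrightarrow> j \<in> {..k} \<Longrightarrow>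
       dist (omega_from f 0 j y) (omega_from f 0 j z) < \<delta> / 2"
    by (rule continuous_on_finite_family_dist_less[of "{..k}" X "omega_from f 0" z "\<delta> / 2"])
      (use continuous_on_omega_from[OF assms(1,2)] assms(3,4) in auto)
  show ?thesis
  proof (rule that)
    show "openin (top_of_set X) (X \<inter> ball z e)" by (simp add: openin_open_Int)
    show "z \<in> X \<inter> ball z e" using assms(3) \<open>e > 0\<close> by simp
    fix j S assume "j \<le> k" "S \<subseteq> X \<inter> ball z e"
    have "dist y (omega_from f 0 j z) \<le> \<delta> / 2" if y: "y \<in> omega_from f 0 j ` S" for y
    proof -
      obtain x where "x \<in> S" "y = omega_from f 0 j x" using y by blast
      moreover have "x \<in> X" "dist x z < e"
        using \<open>x \<in> S\<close> \<open>S \<subseteq> X \<inter> ball z e\<close> by (auto simp: dist_commute)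
      ultimately have "dist y (omega_from f 0 j z) < \<delta> / 2"
        using close \<open>j \<le> k\<close> by simp
      then show ?thesis by (rule less_imp_le)
    qed
    then have "diameter (omega_from f 0 j ` S) \<le> 2 * (\<delta> / 2)"
      using assms(4) by (intro diameter_le_twice_radius) auto
    then show "diameter (omega_from f 0 j ` S) \<le> \<delta>" by simp
  qed
qed

lemma feeble_openD:
  assumes "feeble_open X f" "openin (top_of_set X) U" "U \<noteq> {}" "n \<ge> 1"
  obtains W where "openin (top_of_set X) W" "W \<noteq> {}" "W \<subseteq> f n ` U"
  using assms(1)[unfolded feeble_open_def, rule_format, of U n] assms(2-4) that by blast

lemma feeble_open_omega_from_image:
  assumes "feeble_open X f" "openin (top_of_set X) W" "W \<noteq> {}"
  obtains Q where "openin (top_of_set X) Q" "Q \<noteq> {}" "Q \<subseteq> omega_from f k m ` W"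
proof -
  have "\<exists>Q. openin (top_of_set X) Q \<and> Q \<noteq> {} \<and> Q \<subseteq> omega_from f k m ` W"
  proof (induction m)
    case 0
    show ?case using assms(2,3) by (intro exI[of _ W]) simp
  next
    case (Suc m)
    show ?case
    proof (cases "Suc m \<le> k")
      case True
      then show ?thesis using assms(2,3) by (intro exI[of _ W]) simp
    next
      case False
      obtain Q where Q: "openin (top_of_set X) Q" "Q \<noteq> {}" "Q \<subseteq> omega_from f k m ` W"
        using Suc.IH by blast
      obtain Q' where Q': "openin (top_of_set X) Q'" "Q' \<noteq> {}" "Q' \<subseteq> f (Suc m) ` Q"
        using feeble_openD[OF assms(1) Q(1,2), of "Suc m"] by auto
      have "f (Suc m) ` Q \<subseteq> f (Suc m) ` omega_from f k m ` W"
        using Q(3) by (rule image_mono)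
      also have "\<dots> = omega_from f k (Suc m) ` W"
        using False by (simp add: image_comp)
      finally show ?thesis
        using Q' by (intro exI[of _ Q']) simp
    qed
  qed
  with that show ?thesis by blast
qed

lemma sensitive_from_0_imp_sensitive_from:
  assumes "bounded X"
    and cont: "\<And>n. n \<ge> 1 \<Longrightarrow> continuous_on X (f n)"
    and onto: "\<And>n. n \<ge> 1 \<Longrightarrow> f n ` X = X"
    and "sensitive_from X f 0"
  shows "sensitive_from X f k"
proof -
  have into: "f n ` X \<subseteq> X" if "n \<ge> 1" for n using onto[OF that] by simp
  obtain \<delta> where "\<delta> > 0" and sens:
    "\<And>x U. x \<in> X \<Longrightarrow> nbhd_in X x U \<Longrightarrow> \<exists>n>0. diameter (omega_from f 0 n ` U) > \<delta>"
    using assms(4) unfolding sensitive_from_def by blast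
  show ?thesis
    unfolding sensitive_from_def
  proof (intro exI[of _ \<delta>] conjI ballI allI impI \<open>\<delta> > 0\<close>)
    fix x U assume "x \<in> X" "nbhd_in X x U"
    then obtain W where W: "openin (top_of_set X) W" "x \<in> W" "W \<subseteq> U" "U \<subseteq> X"
      unfolding nbhd_in_def by blast
    have "x \<in> omega_from f 0 k ` X"
      using \<open>x \<in> X\<close> omega_from_image_eq[of f X 0 k] onto by simp
    then obtain z where "z \<in> X" "omega_from f 0 k z = x" by blast
    obtain V where V: "openin (top_of_set X) V" "z \<in> V"
      and small: "\<And>j S. j \<le> k \<Longrightarrow> S \<subseteq> V \<Longrightarrow> diameter (omega_from f 0 j ` S) \<le> \<delta>"
      using nbhd_with_small_initial_images[where X=X and f=f and z=z and \<delta>=\<delta> and k=k]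
        cont into \<open>z \<in> X\<close> \<open>\<delta> > 0\<close> by blast
    define V' where "V' = V \<inter> (X \<inter> omega_from f 0 k -` W)"
    have "omega_from f 0 k \<in> X \<rightarrow> X"
      unfolding image_subset_iff_funcset[symmetric] by (intro omega_from_image_subset into)
    moreover have "continuous_on X (omega_from f 0 k)"
      by (intro continuous_on_omega_from cont into)
    ultimately have "openin (top_of_set X) V'"
      unfolding V'_def using V(1) W(1) by (intro openin_Int continuous_openin_preimage)
    moreover have "z \<in> V'"
      using V(2) W(2) \<open>z \<in> X\<close> \<open>omega_from f 0 k z = x\<close> by (simp add: V'_def)
    ultimately have "nbhd_in X z V'" by (rule nbhd_in_openin)
    then obtain n where big: "diameter (omega_from f 0 n ` V') > \<delta>"
      using sens[OF \<open>z \<in> X\<close>] by blast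
    have "n > k"
    proof (rule ccontr)
      assume "\<not> n > k"
      then have "diameter (omega_from f 0 n ` V') \<le> \<delta>"
        by (intro small) (auto simp: V'_def)
      with big show False by simp
    qed
    then have "omega_from f 0 n ` V' = omega_from f k n ` omega_from f 0 k ` V'"
      using omega_from_split[of 0 k n f] by (simp add: image_comp)
    also have "\<dots> \<subseteq> omega_from f k n ` U"
      using W(3) by (intro image_mono) (auto simp: V'_def)
    finally have "diameter (omega_from f 0 n ` V') \<le> diameter (omega_from f k n ` U)"
      using bounded_omega_from_image[OF \<open>bounded X\<close> into W(4)] by (rule diameter_subset)
    with big have "diameter (omega_from f k n ` U) > \<delta>" by linarith
    with \<open>n > k\<close> show "\<exists>n>k. diameter (omega_from f k n ` U) > \<delta>" by blast
  qed
qed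

lemma sensitive_from_imp_sensitive_from_0:
  assumes "bounded X"
    and into: "\<And>n. n \<ge> 1 \<Longrightarrow> f n ` X \<subseteq> X"
    and "feeble_open X f" "sensitive_from X f k"
  shows "sensitive_from X f 0"
proof -
  obtain \<delta> where "\<delta> > 0" and sens:
    "\<And>x U. x \<in> X \<Longrightarrow> nbhd_in X x U \<Longrightarrow> \<exists>n>k. diameter (omega_from f k n ` U) > \<delta>"
    using assms(4) unfolding sensitive_from_def by blast
  show ?thesis
    unfolding sensitive_from_def
  proof (intro exI[of _ \<delta>] conjI ballI allI impI \<open>\<delta> > 0\<close>)
    fix x U assume "x \<in> X" "nbhd_in X x U"
    then obtain W where W: "openin (top_of_set X) W" "x \<in> W" "W \<subseteq> U" "U \<subseteq> X"
      unfolding nbhd_in_def by blast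
    obtain Q where Q: "openin (top_of_set X) Q" "Q \<noteq> {}" "Q \<subseteq> omega_from f 0 k ` W"
      using feeble_open_omega_from_image[OF assms(3) W(1)] W(2) by blast
    then obtain y where "y \<in> Q" "y \<in> X"
      using openin_imp_subset by blast
    then obtain n where "n > k" and big: "diameter (omega_from f k n ` Q) > \<delta>"
      using sens nbhd_in_openin[OF Q(1)] by blast
    have "omega_from f k n ` Q \<subseteq> omega_from f k n ` omega_from f 0 k ` W"
      using Q(3) by (rule image_mono)
    also have "\<dots> = omega_from f 0 n ` W"
      using omega_from_split[of 0 k n f] \<open>n > k\<close> by (simp add: image_comp)
    also have "\<dots> \<subseteq> omega_from f 0 n ` U"
      using W(3) by (rule image_mono)
    finally have "diameter (omega_from f k n ` Q) \<le> diameter (omega_from f 0 n ` U)"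
      using bounded_omega_from_image[OF \<open>bounded X\<close> into W(4)] by (rule diameter_subset)
    with big have "diameter (omega_from f 0 n ` U) > \<delta>" by linarith
    with \<open>n > k\<close> show "\<exists>n>0. diameter (omega_from f 0 n ` U) > \<delta>"
      by (intro exI[of _ n]) simp
  qed
qed

theorem mainTheorem6:
  fixes X :: "'a::metric_space set" and f :: "nat \<Rightarrow> 'a \<Rightarrow> 'a" and k :: nat
  assumes "compact X"
    and "\<And>n. n \<ge> 1 \<Longrightarrow> continuous_on X (f n)"
    and "\<And>n. n \<ge> 1 \<Longrightarrow> f n ` X = X"
  shows "(sensitive_from X f 0 \<longrightarrow> sensitive_from X f k)
       \<and> (feeble_open X f \<longrightarrow> sensitive_from X f k \<longrightarrow> sensitive_from X f 0)"
proof (intro conjI impI)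
  have "bounded X" using assms(1) by (rule compact_imp_bounded)
  show "sensitive_from X f k" if "sensitive_from X f 0"
    using \<open>bounded X\<close> assms(2,3) that by (rule sensitive_from_0_imp_sensitive_from)
  have into: "f n ` X \<subseteq> X" if "n \<ge> 1" for n using assms(3)[OF that] by simp
  show "sensitive_from X f 0" if "feeble_open X f" "sensitive_from X f k"
    using \<open>bounded X\<close> into that by (rule sensitive_from_imp_sensitive_from_0)
qed

end
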